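(* Let $M$ be a free $\mathbb{T}$-module with a finite $\mathbb{T}$-basis $\{\widehat m_1,\dots,\widehat m_n\}$, let $V=\{\sum_{l=1}^n x_l\widehat m_l : x_l\in\mathbb{C}(\mathbf{i_1})\}\subset M$, and let $(V^2,+_{V^2},\cdot_{V^2})$ be the $\mathbb{T}$-module defined below. Let $\{\widehat v_1,\dots,\widehat v_n\}$ be a basis of the vector space $V$ over $\mathbb{C}(\mathbf{i_1})$. Then $\{(\widehat v_l;\widehat v_l): l=1,\dots,n\}$ is a basis of the $\mathbb{T}$-module $V^2$ (so $V^2$ is free), and $\{\widehat v_1,\dots,\widehat v_n\}$ is a $\mathbb{T}$-basis of $M$.
   Context: Bicomplex numbers: $\mathbb{T}=\{z_1+z_2\mathbf{i_2}: z_1,z_2\in\mathbb{C}(\mathbf{i_1})\}$, where $\mathbb{C}(\mathbf{i_1})=\{x+y\mathbf{i_1}: x,y\in\mathbb{R}\}$, with $\mathbf{i_1}^2=\mathbf{i_2}^2=-1$, $\mathbf{i_1}\mathbf{i_2}=\mathbf{i_2}\mathbf{i_1}=\mathbf{j}$, $\mathbf{j}^2=1$; $\mathbb{T}$ is a commutative ring. The idempotents are $\mathbf{e_1}=(1+\mathbf{j})/2$, $\mathbf{e_2}=(1-\mathbf{j})/2$, with $\mathbf{e_1}^2=\mathbf{e_1}$, $\mathbf{e_2}^2=\mathbf{e_2}$, $\mathbf{e_1}\mathbf{e_2}=0$, $\mathbf{e_1}+\mathbf{e_2}=1$; every $\lambda\in\mathbb{T}$ is uniquely $\lambda=\lambda_1\mathbf{e_1}+\lambda_2\mathbf{e_2}$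 with $\lambda_1,\lambda_2\in\mathbb{C}(\mathbf{i_1})$. $V^2=\{(\widehat X;\widehat Y): \widehat X,\widehat Y\in V\}$ with addition $(\widehat X_1;\widehat Y_1)+_{V^2}(\widehat X_2;\widehat Y_2)=(\widehat X_1+\widehat X_2;\widehat Y_1+\widehat Y_2)$ and scalar multiplication $\lambda\cdot_{V^2}(\widehat X;\widehat Y)=(\lambda_1\widehat X;\lambda_2\widehat Y)$ for $\lambda=\lambda_1\mathbf{e_1}+\lambda_2\mathbf{e_2}$. *)

theory Defs
  imports Complex_Main "HOL-Library.Product_Plus"
begin

datatype bicomplex = Bicomplex (bc1: complex) (bc2: complex)
  \<comment> \<open>Bicomplex z1 z2 represents z1 + z2 i2, with C(i1) modelled by Isabelle's complex (i1 = \<i>)\<close>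

instantiation bicomplex :: comm_ring_1
begin
definition "0 = Bicomplex 0 0"
definition "1 = Bicomplex 1 0"
definition "x + y = Bicomplex (bc1 x + bc1 y) (bc2 x + bc2 y)"
definition "x - y = Bicomplex (bc1 x - bc1 y) (bc2 x - bc2 y)"
definition "- x = Bicomplex (- bc1 x) (- bc2 x)"
definition "x * y = Bicomplex (bc1 x * bc1 y - bc2 x * bc2 y) (bc1 x * bc2 y + bc2 x * bc1 y)"
instance
  by standard (auto simp: zero_bicomplex_def one_bicomplex_def plus_bicomplex_def
      minus_bicomplex_def uminus_bicomplex_def times_bicomplex_def algebra_simps
      intro: bicomplex.expand)
end

definition bc_of_complex :: "complex \<Rightarrow> bicomplex" where
  "bc_of_complex z = Bicomplex z 0"

definition bc_i1 :: bicomplex where "bc_i1 = Bicomplex \<i> 0"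
definition bc_i2 :: bicomplex where "bc_i2 = Bicomplex 0 1"
definition bc_j :: bicomplex where "bc_j = bc_i1 * bc_i2"

definition bc_e1 :: bicomplex where "bc_e1 = bc_of_complex (1/2) * (1 + bc_j)"
definition bc_e2 :: bicomplex where "bc_e2 = bc_of_complex (1/2) * (1 - bc_j)"

definition idem_comps :: "bicomplex \<Rightarrow> complex \<times> complex" where
  "idem_comps lam = (THE p. lam = bc_of_complex (fst p) * bc_e1 + bc_of_complex (snd p) * bc_e2)"

definition idem1 :: "bicomplex \<Rightarrow> complex" where "idem1 lam = fst (idem_comps lam)"
definition idem2 :: "bicomplex \<Rightarrow> complex" where "idem2 lam = snd (idem_comps lam)"

definition cscale :: "(bicomplex \<Rightarrow> 'm \<Rightarrow> 'm) \<Rightarrow> complex \<Rightarrow> 'm \<Rightarrow> 'm" where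
  "cscale smul c x = smul (bc_of_complex c) x"

definition Vspace :: "(bicomplex \<Rightarrow> 'm::ab_group_add \<Rightarrow> 'm) \<Rightarrow> (nat \<Rightarrow> 'm) \<Rightarrow> nat \<Rightarrow> 'm set" where
  "Vspace smul m n = {(\<Sum>l\<in>{1..n}. smul (bc_of_complex (x l)) (m l)) | x. True}"

text \<open>Addition on V^2 is componentwise (that of the product type).
  It is defined on all of M x M; V^2 = V x V is the relevant carrier.\<close>
definition v2smul :: "(bicomplex \<Rightarrow> 'm \<Rightarrow> 'm) \<Rightarrow> bicomplex \<Rightarrow> 'm \<times> 'm \<Rightarrow> 'm \<times> 'm" where
  "v2smul smul lam XY = (cscale smul (idem1 lam) (fst XY), cscale smul (idem2 lam) (snd XY))"

end

theory Submission
  imports Defs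
begin

text \<open>
  The idempotent components \<open>idem1\<close>, \<open>idem2\<close> are ring homomorphisms from the
  bicomplex numbers onto \<open>C(i1)\<close> that fix \<open>C(i1)\<close>, are jointly injective, and satisfy
  \<open>e1 * \<lambda> = e1 * idem1 \<lambda>\<close>, \<open>e2 * \<lambda> = e2 * idem2 \<lambda>\<close>. Hence \<open>V\<^sup>2\<close> is the
  product of two copies of the \<open>C(i1)\<close>-space V on which \<lambda> acts through its two
  components, and the diagonal of a \<open>C(i1)\<close>-basis of V is a basis of \<open>V\<^sup>2\<close>.

  For M, multiplying a relation \<open>\<Sum>w. u w * w = 0\<close> by \<open>e1\<close> gives
  \<open>e1 * (\<Sum>w. idem1 (u w) * w) = 0\<close>. The inner sum lies in V, whose elements have
  coordinates in \<open>C(i1)\<close> with respect to the basis m, and \<open>e1 * c = 0\<close> forces \<open>c = 0\<close>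
  for \<open>c \<in> C(i1)\<close>; so the inner sum vanishes, and \<open>C(i1)\<close>-independence gives
  \<open>idem1 (u w) = 0\<close>; likewise for \<open>e2\<close>. Spanning holds because every \<open>m l\<close> lies in V,
  the \<open>C(i1)\<close>-span of the \<open>v l\<close>.
\<close>

lemma idem_comps_eq: "idem_comps lam = (bc1 lam - \<i> * bc2 lam, bc1 lam + \<i> * bc2 lam)"
  unfolding idem_comps_def
proof (rule the_equality)
  show "lam = bc_of_complex (fst (bc1 lam - \<i> * bc2 lam, bc1 lam + \<i> * bc2 lam)) * bc_e1
      + bc_of_complex (snd (bc1 lam - \<i> * bc2 lam, bc1 lam + \<i> * bc2 lam)) * bc_e2"
    by (cases lam) (simp add: bc_e1_def bc_e2_def bc_j_def bc_i1_def bc_i2_def bc_of_complex_def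
        times_bicomplex_def plus_bicomplex_def minus_bicomplex_def one_bicomplex_def field_simps)
  show "p = (bc1 lam - \<i> * bc2 lam, bc1 lam + \<i> * bc2 lam)"
    if "lam = bc_of_complex (fst p) * bc_e1 + bc_of_complex (snd p) * bc_e2" for p
    using that by (cases p) (simp add: bc_e1_def bc_e2_def bc_j_def bc_i1_def bc_i2_def
        bc_of_complex_def times_bicomplex_def plus_bicomplex_def minus_bicomplex_def
        one_bicomplex_def field_simps)
qed

lemma idem1_eq: "idem1 lam = bc1 lam - \<i> * bc2 lam"
  and idem2_eq: "idem2 lam = bc1 lam + \<i> * bc2 lam"
  by (simp_all add: idem1_def idem2_def idem_comps_eq)

lemma bc_e1_eq: "bc_e1 = Bicomplex (1/2) (\<i>/2)"
  and bc_e2_eq: "bc_e2 = Bicomplex (1/2) (-\<i>/2)"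
  by (simp_all add: bc_e1_def bc_e2_def bc_j_def bc_i1_def bc_i2_def bc_of_complex_def
      times_bicomplex_def plus_bicomplex_def minus_bicomplex_def one_bicomplex_def)

lemma idem1_add: "idem1 (x + y) = idem1 x + idem1 y"
  and idem2_add: "idem2 (x + y) = idem2 x + idem2 y"
  and idem1_mult: "idem1 (x * y) = idem1 x * idem1 y"
  and idem2_mult: "idem2 (x * y) = idem2 x * idem2 y"
  and idem1_one: "idem1 1 = 1"
  and idem2_one: "idem2 1 = 1"
  and idem1_bc_of_complex: "idem1 (bc_of_complex c) = c"
  and idem2_bc_of_complex: "idem2 (bc_of_complex c) = c"
  by (simp_all add: idem1_eq idem2_eq plus_bicomplex_def times_bicomplex_def one_bicomplex_def
      bc_of_complex_def algebra_simps)

lemma idem1_bc_e1: "idem1 bc_e1 = 1" and idem2_bc_e1: "idem2 bc_e1 = 0"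
  and idem1_bc_e2: "idem1 bc_e2 = 0" and idem2_bc_e2: "idem2 bc_e2 = 1"
  by (simp_all add: idem1_eq idem2_eq bc_e1_eq bc_e2_eq field_simps)

lemma bicomplex_eq_0_iff_idem: "x = 0 \<longleftrightarrow> idem1 x = 0 \<and> idem2 x = 0"
  by (cases x) (auto simp: idem1_eq idem2_eq zero_bicomplex_def)

lemma bc_e1_mult_idem1: "bc_e1 * bc_of_complex (idem1 lam) = bc_e1 * lam"
  and bc_e2_mult_idem2: "bc_e2 * bc_of_complex (idem2 lam) = bc_e2 * lam"
  by (simp_all add: bc_e1_eq bc_e2_eq idem1_eq idem2_eq bc_of_complex_def times_bicomplex_def
      field_simps)

lemma bc_e1_mult_bc_of_complex_eq_0: "bc_e1 * bc_of_complex c = 0 \<Longrightarrow> c = 0"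
  and bc_e2_mult_bc_of_complex_eq_0: "bc_e2 * bc_of_complex c = 0 \<Longrightarrow> c = 0"
  by (simp_all add: bc_e1_eq bc_e2_eq bc_of_complex_def times_bicomplex_def zero_bicomplex_def)

lemma bc_of_complex_add: "bc_of_complex (a + b) = bc_of_complex a + bc_of_complex b"
  and bc_of_complex_mult: "bc_of_complex (a * b) = bc_of_complex a * bc_of_complex b"
  and bc_of_complex_one: "bc_of_complex 1 = 1"
  and bc_of_complex_zero: "bc_of_complex 0 = 0"
  by (simp_all add: plus_bicomplex_def times_bicomplex_def one_bicomplex_def
      zero_bicomplex_def bc_of_complex_def)

lemma (in module) independent_inj_on_sumD:
  assumes "independent (f ` I)" "inj_on f I" "finite I" "(\<Sum>i\<in>I. u i *s f i) = 0" "i \<in> I"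
  shows "u i = 0"
proof -
  let ?w = "\<lambda>x. u (inv_into I f x)"
  have "(\<Sum>x\<in>f ` I. ?w x *s x) = (\<Sum>i\<in>I. u i *s f i)"
    using assms(2) by (simp add: sum.reindex inv_into_f_f)
  then have "?w (f i) = 0"
    using assms by (intro independentD[of "f ` I" "f ` I"]) auto
  then show ?thesis
    using assms(2,5) by (simp add: inv_into_f_f)
qed

lemma module_cscale: "module smul \<Longrightarrow> module (cscale smul)"
  unfolding module_def cscale_def
  by (simp add: bc_of_complex_add bc_of_complex_mult bc_of_complex_one)

lemma module_v2smul: "module smul \<Longrightarrow> module (v2smul smul)"
  by (drule module_cscale) (simp add: module_def v2smul_def idem1_add idem2_add idem1_mult
      idem2_mult idem1_one idem2_one)

lemma span_cscale_subset: "module smul \<Longrightarrow> module.span (cscale smul) S \<subseteq> module.span smul S"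
  by (rule module.span_minimal[OF module_cscale])
    (auto simp: module.span_superset module.subspace_def[OF module_cscale] cscale_def
      module.span_zero module.span_add module.span_scale)

lemma independent_v2smul_diagonal:
  assumes "module smul" "\<not> module.dependent (cscale smul) B"
  shows "\<not> module.dependent (v2smul smul) ((\<lambda>w. (w, w)) ` B)"
proof -
  interpret C: module "cscale smul" by (rule module_cscale[OF assms(1)])
  interpret P: module "v2smul smul" by (rule module_v2smul[OF assms(1)])
  have "u p = 0"
    if t: "finite t" "t \<subseteq> (\<lambda>w. (w, w)) ` B" and rel: "(\<Sum>p\<in>t. v2smul smul (u p) p) = 0"
      and "p \<in> t" for t u p
  proof -
    obtain s where s: "s \<subseteq> B" "t = (\<lambda>w. (w, w)) ` s"
      using t(2) by (rule subset_imageE)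
    have inj: "inj_on (\<lambda>w. (w, w)) s"
      by (rule inj_onI) simp
    with t(1) s(2) have "finite s"
      using finite_image_iff by blast
    from rel have "(\<Sum>w\<in>s. v2smul smul (u (w, w)) (w, w)) = 0"
      by (simp add: s(2) sum.reindex[OF inj])
    then have "(\<Sum>w\<in>s. cscale smul (idem1 (u (w, w))) w) = 0"
        and "(\<Sum>w\<in>s. cscale smul (idem2 (u (w, w))) w) = 0"
      by (simp_all add: prod_eq_iff fst_sum snd_sum v2smul_def)
    then show "u p = 0"
      using \<open>p \<in> t\<close> \<open>finite s\<close> s assms(2) C.independentD[of B s]
      by (auto simp: bicomplex_eq_0_iff_idem[of "u p"])
  qed
  then show ?thesis
    by (auto simp: P.independent_explicit_module)
qed

lemma span_v2smul_diagonal: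
  assumes "module smul"
  shows "module.span (v2smul smul) ((\<lambda>w. (w, w)) ` B)
    = module.span (cscale smul) B \<times> module.span (cscale smul) B"
proof -
  interpret C: module "cscale smul" by (rule module_cscale[OF assms])
  interpret P: module "v2smul smul" by (rule module_v2smul[OF assms])
  let ?D = "P.span ((\<lambda>w. (w, w)) ` B)"
  have e1: "v2smul smul bc_e1 (w, w) = (w, 0)" and e2: "v2smul smul bc_e2 (w, w) = (0, w)" for w
    by (simp_all add: v2smul_def idem1_bc_e1 idem2_bc_e1 idem1_bc_e2 idem2_bc_e2)
  have c1: "v2smul smul (bc_of_complex c) (x, 0) = (cscale smul c x, 0)"
    and c2: "v2smul smul (bc_of_complex c) (0, x) = (0, cscale smul c x)" for c x
    by (simp_all add: v2smul_def idem1_bc_of_complex idem2_bc_of_complex)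
  have diagonal_scale: "v2smul smul e (w, w) \<in> ?D" if "w \<in> B" for e w
    using that by (intro P.span_scale P.span_base) auto
  have "C.span B \<subseteq> {x. (x, 0) \<in> ?D}"
  proof (rule C.span_minimal)
    show "B \<subseteq> {x. (x, 0) \<in> ?D}"
      using diagonal_scale[where e = bc_e1] by (auto simp: e1)
    show "C.subspace {x. (x, 0) \<in> ?D}"
      using P.span_add[of "(_, 0)" _ "(_, 0)"] P.span_scale[of "(_, 0)" _ "bc_of_complex _"]
      by (auto simp: C.subspace_def c1 P.span_zero[unfolded zero_prod_def])
  qed
  moreover have "C.span B \<subseteq> {y. (0, y) \<in> ?D}"
  proof (rule C.span_minimal)
    show "B \<subseteq> {y. (0, y) \<in> ?D}"
      using diagonal_scale[where e = bc_e2] by (auto simp: e2)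
    show "C.subspace {y. (0, y) \<in> ?D}"
      using P.span_add[of "(0, _)" _ "(0, _)"] P.span_scale[of "(0, _)" _ "bc_of_complex _"]
      by (auto simp: C.subspace_def c2 P.span_zero[unfolded zero_prod_def])
  qed
  ultimately have "C.span B \<times> C.span B \<subseteq> ?D"
    by (auto intro: P.span_add[of "(_, 0)" _ "(0, _)", simplified])
  moreover have "?D \<subseteq> C.span B \<times> C.span B"
  proof (rule P.span_minimal)
    show "(\<lambda>w. (w, w)) ` B \<subseteq> C.span B \<times> C.span B"
      by (auto intro: C.span_base)
    show "P.subspace (C.span B \<times> C.span B)"
      by (auto simp: P.subspace_def v2smul_def zero_prod_def C.span_zero C.span_add C.span_scale)
  qed
  ultimately show ?thesis
    by blast
qed

lemma basis_in_Vspace: "module smul \<Longrightarrow> k \<in> {1..n} \<Longrightarrow> m k \<in> Vspace smul m n"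
  unfolding Vspace_def
  by (intro CollectI exI[of _ "\<lambda>l. if l = k then 1 else 0"])
    (simp add: if_distrib[of bc_of_complex] bc_of_complex_one bc_of_complex_zero
      module.scale_zero_left module.scale_one if_distrib[of "\<lambda>c. smul c _"] cong: if_cong)

lemma Vspace_eq_0_if_scale_eq_0:
  assumes "module smul" "inj_on m {1..n}" "\<not> module.dependent smul (m ` {1..n})"
    and e: "\<And>c. e * bc_of_complex c = 0 \<Longrightarrow> c = 0"
    and x: "x \<in> Vspace smul m n" "smul e x = 0"
  shows "x = 0"
proof -
  interpret M: module smul by (rule assms(1))
  obtain c where c: "x = (\<Sum>l\<in>{1..n}. smul (bc_of_complex (c l)) (m l))"
    using x(1) unfolding Vspace_def by blast
  with x(2) have "(\<Sum>l\<in>{1..n}. smul (e * bc_of_complex (c l)) (m l)) = 0"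
    by (simp add: M.scale_sum_right)
  then have "e * bc_of_complex (c l) = 0" if "l \<in> {1..n}" for l
    using M.independent_inj_on_sumD[OF assms(3,2), of "\<lambda>l. e * bc_of_complex (c l)"] that
    by simp
  then have "c l = 0" if "l \<in> {1..n}" for l
    using that e by blast
  then show ?thesis
    by (simp add: c bc_of_complex_zero)
qed

lemma idempotent_scale_component_sum_eq_0:
  assumes "module smul" "\<And>lam. e * bc_of_complex (\<phi> lam) = e * lam"
    and "(\<Sum>w\<in>t. smul (u w) w) = 0"
  shows "smul e (\<Sum>w\<in>t. cscale smul (\<phi> (u w)) w) = 0"
proof -
  interpret M: module smul by (rule assms(1))
  have "smul e (\<Sum>w\<in>t. cscale smul (\<phi> (u w)) w) = (\<Sum>w\<in>t. smul (e * u w) w)"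
    by (simp add: cscale_def M.scale_sum_right assms(2))
  also have "\<dots> = smul e (\<Sum>w\<in>t. smul (u w) w)"
    by (simp add: M.scale_sum_right)
  finally show ?thesis
    by (simp add: assms(3))
qed

lemma independent_if_idempotents_faithful:
  assumes "module smul" "\<not> module.dependent (cscale smul) B"
    and e1: "\<And>x. x \<in> module.span (cscale smul) B \<Longrightarrow> smul bc_e1 x = 0 \<Longrightarrow> x = 0"
    and e2: "\<And>x. x \<in> module.span (cscale smul) B \<Longrightarrow> smul bc_e2 x = 0 \<Longrightarrow> x = 0"
  shows "\<not> module.dependent smul B"
proof -
  interpret M: module smul by (rule assms(1))
  interpret C: module "cscale smul" by (rule module_cscale[OF assms(1)])
  have "u w = 0"
    if t: "finite t" "t \<subseteq> B" and rel: "(\<Sum>w\<in>t. smul (u w) w) = 0" and "w \<in> t" for t u w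
  proof -
    have span: "(\<Sum>w\<in>t. cscale smul (\<phi> (u w)) w) \<in> C.span B" for \<phi>
      using t(2) by (intro C.span_sum C.span_scale C.span_base) blast
    have "(\<Sum>w\<in>t. cscale smul (idem1 (u w)) w) = 0"
      by (rule e1[OF span idempotent_scale_component_sum_eq_0[OF assms(1) bc_e1_mult_idem1 rel]])
    then have "idem1 (u w) = 0"
      by (rule C.independentD[OF assms(2) t _ \<open>w \<in> t\<close>])
    moreover have "(\<Sum>w\<in>t. cscale smul (idem2 (u w)) w) = 0"
      by (rule e2[OF span idempotent_scale_component_sum_eq_0[OF assms(1) bc_e2_mult_idem2 rel]])
    then have "idem2 (u w) = 0"
      by (rule C.independentD[OF assms(2) t _ \<open>w \<in> t\<close>])
    ultimately show "u w = 0"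
      by (simp add: bicomplex_eq_0_iff_idem[of "u w"])
  qed
  then show ?thesis
    unfolding M.independent_explicit_module by blast
qed

theorem mainTheorem4:
  fixes smul :: "bicomplex \<Rightarrow> 'm::ab_group_add \<Rightarrow> 'm"
    and m v :: "nat \<Rightarrow> 'm" and n :: nat
  assumes M_module: "module smul"
    and m_basis: "inj_on m {1..n}" "\<not> module.dependent smul (m ` {1..n})"
      "module.span smul (m ` {1..n}) = UNIV"
    and v_in_V: "v ` {1..n} \<subseteq> Vspace smul m n"
    and v_basis: "inj_on v {1..n}" "\<not> module.dependent (cscale smul) (v ` {1..n})"
      "module.span (cscale smul) (v ` {1..n}) = Vspace smul m n"
  shows "module (v2smul smul)
      \<and> inj_on (\<lambda>l. (v l, v l)) {1..n}
      \<and> \<not> module.dependent (v2smul smul) ((\<lambda>l. (v l, v l)) ` {1..n})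
      \<and> module.span (v2smul smul) ((\<lambda>l. (v l, v l)) ` {1..n})
          = Vspace smul m n \<times> Vspace smul m n
      \<and> \<not> module.dependent smul (v ` {1..n})
      \<and> module.span smul (v ` {1..n}) = UNIV"
proof -
  interpret M: module smul by (rule M_module)
  have diagonal: "(\<lambda>l. (v l, v l)) ` {1..n} = (\<lambda>w. (w, w)) ` v ` {1..n}"
    by (simp add: image_image)
  have "inj_on (\<lambda>l. (v l, v l)) {1..n}"
    using v_basis(1) unfolding inj_on_def by blast
  moreover have "\<not> module.dependent smul (v ` {1..n})"
  proof -
    have faithful: "x = 0"
      if "x \<in> module.span (cscale smul) (v ` {1..n})" "smul e x = 0"
        and "\<And>c. e * bc_of_complex c = 0 \<Longrightarrow> c = 0" for x e
      using Vspace_eq_0_if_scale_eq_0[OF M_module m_basis(1,2) that(3) _ that(2)] that(1) v_basis(3)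
      by blast
    show ?thesis
      using independent_if_idempotents_faithful[OF M_module v_basis(2)]
        faithful[OF _ _ bc_e1_mult_bc_of_complex_eq_0] faithful[OF _ _ bc_e2_mult_bc_of_complex_eq_0]
      by blast
  qed
  moreover have "M.span (v ` {1..n}) = UNIV"
  proof -
    have "m ` {1..n} \<subseteq> M.span (v ` {1..n})"
      using basis_in_Vspace[OF M_module] span_cscale_subset[OF M_module] v_basis(3) by blast
    then show ?thesis
      using M.span_minimal[OF _ M.subspace_span] m_basis(3) by blast
  qed
  ultimately show ?thesis
    unfolding diagonal
    using module_v2smul[OF M_module] independent_v2smul_diagonal[OF M_module v_basis(2)]
      span_v2smul_diagonal[OF M_module, of "v ` {1..n}"] v_basis(3)
    by simp
qed

end
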